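(* Let $A,B>0$, $x\ge1$, let $\lambda$ be a nonnegative multiplicative function in $\mathcal M(x;A,B)$, and let $\vartheta$ be a complex-valued additive function. Put $$\Theta(x):=\sum_{p^\nu\le x}\frac{\lambda(p^\nu)\vartheta(p^\nu)}{p^\nu},\qquad\mathfrak S(x):=\sum_{p^\nu\le x}\frac{\lambda(p^\nu)|\vartheta(p^\nu)|^2}{p^\nu},$$ the sums running over prime powers $p^\nu$ with $\nu\ge1$. Then $$\sum_{n\le x}\frac{\lambda(n)}{n}|\vartheta(n)-\Theta(x)|^2\ll\mathfrak S(x)\sum_{n\le x}\frac{\lambda(n)}{n},$$ with implied constant depending only on $A,B$.
   Context: For $x\ge1$, $A,B>0$, $\mathcal M(x;A,B)$ is the class of complex multiplicative $f$ with $\max_{p\le x}|f(p)|\le A$ and $\sum_{p^\nu\le x,\ \nu\ge2}|f(p^\nu)|\log(p^\nu)/p^\nu\le B$ ($p$ prime). *)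

theory Defs
  imports "HOL-Analysis.Analysis" "HOL-Number_Theory.Number_Theory"
begin

definition multiplicative :: "(nat \<Rightarrow> 'a::comm_semiring_1) \<Rightarrow> bool" where
  "multiplicative f \<longleftrightarrow> f 1 = 1 \<and> (\<forall>m n. coprime m n \<longrightarrow> f (m * n) = f m * f n)"

definition additive :: "(nat \<Rightarrow> 'a::comm_monoid_add) \<Rightarrow> bool" where
  "additive f \<longleftrightarrow> (\<forall>m n. coprime m n \<longrightarrow> f (m * n) = f m + f n)"

definition classM :: "real \<Rightarrow> real \<Rightarrow> real \<Rightarrow> (nat \<Rightarrow> complex) \<Rightarrow> bool" where
  "classM x A B f \<longleftrightarrow> multiplicative f
     \<and> (\<forall>p. prime p \<and> real p \<le> x \<longrightarrow> cmod (f p) \<le> A)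
     \<and> (\<Sum>(p,\<nu>)\<in>{(p,\<nu>). prime p \<and> 2 \<le> \<nu> \<and> real (p ^ \<nu>) \<le> x}.
          cmod (f (p ^ \<nu>)) * ln (real (p ^ \<nu>)) / real (p ^ \<nu>)) \<le> B"

end

(*
  Put w(n) = lambda(n)/n and enlarge the range n <= x to the set N of integers all of whose
  prime-power components p^nu || n satisfy p^nu <= x. N is a product over the primes p <= x, so
  the w-mass of N is the Euler product of Z_p = sum_{p^nu <= x} w(p^nu), and an additive theta
  behaves on N like a sum of independent random variables: its w-variance about the sum of the
  local means mu_p is (prod Z_p) (sum D_p), each local variance D_p being at most the local second
  moment. By Cauchy-Schwarz the distance from sum mu_p to Theta(x) is controlled by
  sum (Z_p - 1)^2 <= 2A^2 + 2(B / log 4)^2.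

  It remains to compare the mass of N with sum_{n <= x} w(n). Writing log n = sum log p^nu and
  using Chebyshev's bound sum_{p <= y} log p / p <= 2 log y gives
  sum_{n <= z} w(n) log n <= sum_{m <= z} w(m) (2A log(z/m) + B), a differential inequality for
  the partial sums W(z) over N: W(z^(1+eps)) <= (12A + 6) W(z) once log z >= 4B. Boundedly many
  such steps lead from x to exp(2K), K = 2A log x + B, and by Markov's inequality for log n at
  most half of the mass of N lies beyond exp(2K). When log x < 4B there are boundedly many primes
  and the Euler product is bounded directly.
*)

theory Submission
  imports Defs
begin

section \<open>Prime-power-smooth numbers\<close>

definition pp_smooth :: "real \<Rightarrow> nat set \<Rightarrow> nat set" where
  "pp_smooth x P =
     {n. n > 0 \<and> (\<forall>p. prime p \<longrightarrow> p dvd n \<longrightarrow> p \<in> P \<and> real (p ^ multiplicity p n) \<le> x)}"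

definition exps_le :: "real \<Rightarrow> nat \<Rightarrow> nat set" where
  "exps_le x p = {\<nu>. real (p ^ \<nu>) \<le> x}"

lemma pp_smooth_empty: "pp_smooth x {} = {1}"
proof -
  have "n = 1" if "n > 0" "\<forall>p. prime p \<longrightarrow> \<not> p dvd n" for n :: nat
    using that prime_factor_nat by blast
  thus ?thesis unfolding pp_smooth_def by auto
qed

lemma pp_smooth_pos: "m \<in> pp_smooth x P \<Longrightarrow> m > 0"
  unfolding pp_smooth_def by auto

lemma pp_smooth_not_dvd: "prime p \<Longrightarrow> p \<notin> P \<Longrightarrow> m \<in> pp_smooth x P \<Longrightarrow> \<not> p dvd m"
  unfolding pp_smooth_def by auto

lemma pp_smooth_mono: "P \<subseteq> Q \<Longrightarrow> pp_smooth x P \<subseteq> pp_smooth x Q"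
  unfolding pp_smooth_def by blast

lemma zero_in_exps_le: "x \<ge> 1 \<Longrightarrow> 0 \<in> exps_le x p"
  unfolding exps_le_def by simp

lemma finite_exps_le:
  assumes "prime p"
  shows "finite (exps_le x p)"
proof -
  have "exps_le x p \<subseteq> {..nat \<lfloor>x\<rfloor>}"
  proof
    fix \<nu> assume "\<nu> \<in> exps_le x p"
    hence "real (p ^ \<nu>) \<le> x" unfolding exps_le_def by auto
    moreover have "\<nu> < p ^ \<nu>"
      using less_exp[of \<nu>] power_mono[OF prime_ge_2_nat[OF assms], of \<nu>] by linarith
    ultimately have "real \<nu> \<le> x"
      by (metis of_nat_less_iff of_nat_power less_le_trans less_imp_le)
    thus "\<nu> \<in> {..nat \<lfloor>x\<rfloor>}" by (simp add: le_nat_floor)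
  qed
  thus ?thesis using finite_subset by blast
qed

lemma sum_exps_le_split:
  assumes "prime p" "real p \<le> x" "x \<ge> 1"
  shows "(\<Sum>\<nu>\<in>exps_le x p. f \<nu>) = f 0 + f 1 + (\<Sum>\<nu>\<in>{\<nu>\<in>exps_le x p. 2 \<le> \<nu>}. f \<nu>)"
proof -
  define S where "S = {\<nu>\<in>exps_le x p. 2 \<le> \<nu>}"
  have "exps_le x p = insert 0 (insert 1 S)"
    using assms unfolding S_def exps_le_def by auto
  moreover have "finite S" "0 \<notin> S" "1 \<notin> S"
    using finite_exps_le[OF assms(1)] unfolding S_def by auto
  ultimately show ?thesis unfolding S_def[symmetric] by (simp add: add.assoc)
qed

lemma multiplicity_prime_power_times_other:
  fixes p q m :: nat
  assumes "prime p" "prime q" "q \<noteq> p"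
  shows "multiplicity q (p ^ k * m) = multiplicity q m"
proof -
  have "\<not> q dvd p ^ k"
    using assms prime_dvd_power primes_dvd_imp_eq by blast
  thus ?thesis using assms(2) by (simp add: multiplicity_prime_elem_times_other)
qed

lemma power_times_pp_smooth:
  assumes p: "prime p" "p \<notin> P" and \<nu>: "\<nu> \<in> exps_le x p" and m: "m \<in> pp_smooth x P"
  shows "p ^ \<nu> * m \<in> pp_smooth x (insert p P)"
proof -
  have pm: "\<not> p dvd m" using pp_smooth_not_dvd[OF p m] .
  have "q \<in> insert p P \<and> real (q ^ multiplicity q (p ^ \<nu> * m)) \<le> x"
    if q: "prime q" "q dvd p ^ \<nu> * m" for q
  proof (cases "q = p")
    case True
    thus ?thesis using pm \<nu> p by (simp add: multiplicity_decomposeI exps_le_def)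
  next
    case False
    hence "q dvd m"
      using q p prime_dvd_mult_iff prime_dvd_power primes_dvd_imp_eq by metis
    thus ?thesis using m q multiplicity_prime_power_times_other[OF p(1) q(1) False]
      unfolding pp_smooth_def by auto
  qed
  thus ?thesis
    using pp_smooth_pos[OF m] p unfolding pp_smooth_def by (auto simp: prime_gt_0_nat)
qed

lemma pp_smooth_insert_split:
  assumes p: "prime p" and x: "x \<ge> 1" and n: "n \<in> pp_smooth x (insert p P)"
  shows "multiplicity p n \<in> exps_le x p" and "n div p ^ multiplicity p n \<in> pp_smooth x P"
proof -
  have n0: "n > 0" using pp_smooth_pos[OF n] .
  define k where "k = multiplicity p n"
  define m where "m = n div p ^ k"
  have nm: "n = p ^ k * m" unfolding m_def k_def using multiplicity_dvd[of p n] by simp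
  have pm: "\<not> p dvd m" unfolding m_def k_def using n0 p by (intro multiplicity_decompose) auto
  have m0: "m > 0" using n0 nm by (cases "m = 0") auto
  show "multiplicity p n \<in> exps_le x p"
  proof (cases "k = 0")
    case True thus ?thesis using x unfolding exps_le_def k_def by simp
  next
    case False
    hence "p dvd n" using nm by (simp add: dvd_mult2)
    thus ?thesis using n p unfolding pp_smooth_def exps_le_def by auto
  qed
  have "q \<in> P \<and> real (q ^ multiplicity q m) \<le> x" if q: "prime q" "q dvd m" for q
  proof -
    have "q \<noteq> p" "q dvd n" using q pm nm by auto
    moreover have "multiplicity q n = multiplicity q m"
      using nm multiplicity_prime_power_times_other[OF p q(1) \<open>q \<noteq> p\<close>] by simp
    ultimately show ?thesis using q n unfolding pp_smooth_def by auto
  qed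
  thus "n div p ^ multiplicity p n \<in> pp_smooth x P"
    using m0 unfolding pp_smooth_def k_def[symmetric] m_def[symmetric] by auto
qed

lemma bij_betw_pp_smooth_insert:
  assumes p: "prime p" "p \<notin> P" and x: "x \<ge> 1"
  shows "bij_betw (\<lambda>(\<nu>, m). p ^ \<nu> * m) (exps_le x p \<times> pp_smooth x P) (pp_smooth x (insert p P))"
proof (rule bij_betwI[where g = "\<lambda>n. (multiplicity p n, n div p ^ multiplicity p n)"])
  show "(\<lambda>(\<nu>, m). p ^ \<nu> * m) \<in> exps_le x p \<times> pp_smooth x P \<rightarrow> pp_smooth x (insert p P)"
    using power_times_pp_smooth[OF p] by auto
  show "(\<lambda>n. (multiplicity p n, n div p ^ multiplicity p n))
          \<in> pp_smooth x (insert p P) \<rightarrow> exps_le x p \<times> pp_smooth x P"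
    using pp_smooth_insert_split[OF p(1) x] by auto
next
  fix a assume "a \<in> exps_le x p \<times> pp_smooth x P"
  then obtain \<nu> m where a: "a = (\<nu>, m)" "m \<in> pp_smooth x P" by auto
  have "\<not> p dvd m" using pp_smooth_not_dvd[OF p a(2)] .
  thus "(\<lambda>n. (multiplicity p n, n div p ^ multiplicity p n)) ((\<lambda>(\<nu>, m). p ^ \<nu> * m) a) = a"
    using a p by (simp add: multiplicity_decomposeI prime_gt_0_nat)
next
  fix n
  show "(case (multiplicity p n, n div p ^ multiplicity p n) of (\<nu>, m) \<Rightarrow> p ^ \<nu> * m) = n"
    using multiplicity_dvd[of p n] by simp
qed

lemma sum_pp_smooth_insert:
  assumes "prime p" "p \<notin> P" "x \<ge> 1"
  shows "(\<Sum>n\<in>pp_smooth x (insert p P). g n) = (\<Sum>\<nu>\<in>exps_le x p. \<Sum>m\<in>pp_smooth x P. g (p ^ \<nu> * m))"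
  using sum.reindex_bij_betw[OF bij_betw_pp_smooth_insert[OF assms], of g]
  by (simp add: case_prod_unfold sum.cartesian_product)

lemma finite_pp_smooth:
  assumes "finite P" "\<forall>p\<in>P. prime p" "x \<ge> 1"
  shows "finite (pp_smooth x P)"
  using assms
proof (induction P rule: finite_induct)
  case empty thus ?case by (simp add: pp_smooth_empty)
next
  case (insert p P)
  hence "pp_smooth x (insert p P) = (\<lambda>(\<nu>, m). p ^ \<nu> * m) ` (exps_le x p \<times> pp_smooth x P)"
    using bij_betw_pp_smooth_insert[of p P x] by (simp add: bij_betw_def)
  thus ?case using insert finite_exps_le by auto
qed

lemma ln_eq_sum_ln_prime_power_parts:
  fixes n :: nat
  assumes n: "n > 0" and P: "finite P" "prime_factors n \<subseteq> P" "\<forall>p\<in>P. prime p"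
  shows "ln (real n) = (\<Sum>p\<in>P. ln (real (p ^ multiplicity p n)))"
proof -
  have "(\<Prod>p\<in>prime_factors n. p ^ multiplicity p n) = n"
    using prod_prime_factors[of n] n by simp
  hence "real n = (\<Prod>p\<in>prime_factors n. real (p ^ multiplicity p n))"
    by (metis of_nat_prod)
  also have "ln \<dots> = (\<Sum>p\<in>prime_factors n. ln (real (p ^ multiplicity p n)))"
    by (rule ln_prod) (auto simp: prime_gt_0_nat in_prime_factors_iff)
  also have "\<dots> = (\<Sum>p\<in>P. ln (real (p ^ multiplicity p n)))"
  proof (rule sum.mono_neutral_left[OF P(1,2)], safe)
    fix q assume "q \<in> P" "q \<notin> prime_factors n"
    hence "multiplicity q n = 0" using n P(3) by (auto simp: prime_factors_multiplicity)
    thus "ln (real (q ^ multiplicity q n)) = 0" by simp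
  qed
  finally show ?thesis .
qed

lemma upto_subset_pp_smooth:
  "{n. 1 \<le> n \<and> real n \<le> x} \<subseteq> pp_smooth x {p. prime p \<and> real p \<le> x}"
proof
  fix n assume n: "n \<in> {n. 1 \<le> n \<and> real n \<le> x}"
  have "real p \<le> x \<and> real (p ^ multiplicity p n) \<le> x" if "p dvd n" for p
  proof -
    have "p \<le> n" "p ^ multiplicity p n \<le> n"
      using n that multiplicity_dvd[of p n] by (auto intro: dvd_imp_le)
    hence "real p \<le> real n" "real (p ^ multiplicity p n) \<le> real n" by (simp_all only: of_nat_le_iff)
    thus ?thesis using n by (auto simp del: of_nat_power)
  qed
  thus "n \<in> pp_smooth x {p. prime p \<and> real p \<le> x}"
    using n unfolding pp_smooth_def by auto
qed

lemma double_sum_weighted_add: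
  fixes a b u v :: "'a \<Rightarrow> real"
  shows "(\<Sum>i\<in>I. \<Sum>j\<in>J. a i * b j * (u i + v j)) =
    (\<Sum>i\<in>I. a i * u i) * (\<Sum>j\<in>J. b j) + (\<Sum>i\<in>I. a i) * (\<Sum>j\<in>J. b j * v j)"
proof -
  have "(\<Sum>i\<in>I. \<Sum>j\<in>J. a i * b j * (u i + v j)) =
     (\<Sum>i\<in>I. \<Sum>j\<in>J. (a i * u i) * b j + a i * (b j * v j))"
    by (intro sum.cong refl) (simp add: algebra_simps)
  thus ?thesis unfolding sum_product by (simp only: sum.distrib)
qed

lemma double_sum_weighted_add_square:
  fixes a b u v :: "'a \<Rightarrow> real"
  shows "(\<Sum>i\<in>I. \<Sum>j\<in>J. a i * b j * (u i + v j)\<^sup>2) =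
    (\<Sum>i\<in>I. a i * (u i)\<^sup>2) * (\<Sum>j\<in>J. b j) + 2 * (\<Sum>i\<in>I. a i * u i) * (\<Sum>j\<in>J. b j * v j)
    + (\<Sum>i\<in>I. a i) * (\<Sum>j\<in>J. b j * (v j)\<^sup>2)"
proof -
  have "(\<Sum>i\<in>I. \<Sum>j\<in>J. a i * b j * (u i + v j)\<^sup>2) =
     (\<Sum>i\<in>I. \<Sum>j\<in>J. (a i * (u i)\<^sup>2) * b j + (2 * (a i * u i)) * (b j * v j) + a i * (b j * (v j)\<^sup>2))"
    by (intro sum.cong refl) (simp add: power2_eq_square algebra_simps)
  also have "\<dots> = (\<Sum>i\<in>I. a i * (u i)\<^sup>2) * (\<Sum>j\<in>J. b j) + (\<Sum>i\<in>I. 2 * (a i * u i)) * (\<Sum>j\<in>J. b j * v j)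
    + (\<Sum>i\<in>I. a i) * (\<Sum>j\<in>J. b j * (v j)\<^sup>2)"
    unfolding sum_product by (simp only: sum.distrib)
  finally show ?thesis by (simp add: sum_distrib_left)
qed

lemma weighted_Cauchy_Schwarz:
  fixes a f g :: "'a \<Rightarrow> real"
  assumes "\<And>i. i \<in> I \<Longrightarrow> a i \<ge> 0"
  shows "(\<Sum>i\<in>I. a i * f i * g i)\<^sup>2 \<le> (\<Sum>i\<in>I. a i * (f i)\<^sup>2) * (\<Sum>i\<in>I. a i * (g i)\<^sup>2)"
proof -
  have "(\<Sum>i\<in>I. (sqrt (a i) * f i) * (sqrt (a i) * g i))\<^sup>2 \<le>
      (\<Sum>i\<in>I. (sqrt (a i) * f i)\<^sup>2) * (\<Sum>i\<in>I. (sqrt (a i) * g i)\<^sup>2)"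
    by (rule Cauchy_Schwarz_ineq_sum)
  moreover have "(\<Sum>i\<in>I. (sqrt (a i) * f i) * (sqrt (a i) * g i)) = (\<Sum>i\<in>I. a i * f i * g i)"
    using assms by (intro sum.cong refl) (simp add: algebra_simps)
  moreover have "(\<Sum>i\<in>I. (sqrt (a i) * h i)\<^sup>2) = (\<Sum>i\<in>I. a i * (h i)\<^sup>2)" for h
    using assms by (intro sum.cong refl) (simp add: power_mult_distrib)
  ultimately show ?thesis by simp
qed

lemma one_minus_inverse_sq_le:
  fixes z :: real
  assumes "z \<ge> 1"
  shows "(1 - 1 / z)\<^sup>2 \<le> z - 1"
proof -
  have r: "0 \<le> 1 - 1 / z" "1 - 1 / z \<le> 1" using assms by auto
  hence "(1 - 1 / z)\<^sup>2 \<le> 1 - 1 / z" by (simp add: power2_eq_square mult_left_le)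
  also have "\<dots> = (z - 1) / z" using assms by (simp add: field_simps)
  also have "\<dots> \<le> z - 1" using assms by (simp add: divide_le_eq mult_le_cancel_left1)
  finally show ?thesis .
qed

lemma sum_inverse_squares_le: "(\<Sum>n\<in>{2..M}. 1 / (real n)\<^sup>2) \<le> 1 - 1 / real (max 1 M)"
proof (induction M)
  case 0 thus ?case by simp
next
  case (Suc M)
  show ?case
  proof (cases "M = 0")
    case True thus ?thesis by simp
  next
    case False
    hence M1: "M \<ge> 1" by simp
    have "1 / (real (Suc M))\<^sup>2 \<le> 1 / (real M * real (Suc M))"
      using M1 by (intro divide_left_mono) (auto simp: power2_eq_square)
    also have "\<dots> = 1 / real M - 1 / real (Suc M)" using M1 by (simp add: field_simps)
    finally have "1 / (real (Suc M))\<^sup>2 \<le> 1 / real M - 1 / real (Suc M)" .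
    moreover have "(\<Sum>n\<in>{2..Suc M}. 1 / (real n)\<^sup>2) = (\<Sum>n\<in>{2..M}. 1 / (real n)\<^sup>2) + 1 / (real (Suc M))\<^sup>2"
      using M1 by (simp add: atLeastAtMostSuc_conv)
    ultimately show ?thesis using Suc M1 by (simp add: max_def)
  qed
qed

lemma sum_inverse_squares_primes_le: "(\<Sum>p\<in>{p. prime p \<and> real p \<le> x}. 1 / (real p)\<^sup>2) \<le> 1"
proof -
  have "{p. prime p \<and> real p \<le> x} \<subseteq> {2..nat \<lfloor>x\<rfloor>}"
    using prime_ge_2_nat by (auto simp: le_nat_floor)
  hence "(\<Sum>p\<in>{p. prime p \<and> real p \<le> x}. 1 / (real p)\<^sup>2) \<le> (\<Sum>n\<in>{2..nat \<lfloor>x\<rfloor>}. 1 / (real n)\<^sup>2)"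
    by (intro sum_mono2) auto
  also have "\<dots> \<le> 1"
    using sum_inverse_squares_le[of "nat \<lfloor>x\<rfloor>"] by (smt (verit) divide_nonneg_nonneg of_nat_0_le_iff)
  finally show ?thesis .
qed

lemma finite_primes_le: "finite {p::nat. prime p \<and> real p \<le> y}"
proof -
  have "{p::nat. prime p \<and> real p \<le> y} \<subseteq> {..nat \<lfloor>y\<rfloor>}" by (auto simp: le_nat_floor)
  thus ?thesis using finite_subset by blast
qed

lemma sum_ln_prime_divisors_le:
  fixes n :: nat
  assumes "n > 0"
  shows "(\<Sum>p\<in>{p. prime p \<and> p dvd n}. ln (real p)) \<le> ln (real n)"
proof -
  have "{p. prime p \<and> p dvd n} = prime_factors n"
    using assms by (simp add: prime_factors_dvd)
  hence "(\<Sum>p\<in>{p. prime p \<and> p dvd n}. ln (real p)) = (\<Sum>p\<in>prime_factors n. ln (real p))"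
    by (rule sum.cong) simp
  also have "\<dots> \<le> (\<Sum>p\<in>prime_factors n. ln (real (p ^ multiplicity p n)))"
  proof (intro sum_mono)
    fix p assume p: "p \<in> prime_factors n"
    hence "prime p" "multiplicity p n > 0"
      using assms by (auto simp: in_prime_factors_iff prime_multiplicity_gt_zero_iff)
    hence "p \<le> p ^ multiplicity p n"
      using prime_ge_1_nat by (intro self_le_power) auto
    thus "ln (real p) \<le> ln (real (p ^ multiplicity p n))"
      using p by (simp add: in_prime_factors_iff prime_gt_0_nat)
  qed
  also have "\<dots> = ln (real n)"
    by (rule ln_eq_sum_ln_prime_power_parts[OF assms, symmetric]) (auto dest: in_prime_factors_imp_prime)
  finally show ?thesis .
qed

lemma sum_ln_prime_times_quotient_le:
  "(\<Sum>p\<in>{p. prime p \<and> p \<le> N}. ln (real p) * real (N div p)) \<le> (\<Sum>k\<in>{1..N}. ln (real k))"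
proof (induction N)
  case 0 thus ?case by simp
next
  case (Suc N)
  let ?S = "{p. prime p \<and> p \<le> Suc N}"
  have "real (Suc N div p) = real (N div p) + (if p dvd Suc N then 1 else 0)" if "p \<in> ?S" for p
    using that by (auto simp: div_Suc dvd_eq_mod_eq_0)
  hence "(\<Sum>p\<in>?S. ln (real p) * real (Suc N div p)) =
      (\<Sum>p\<in>?S. ln (real p) * real (N div p)) + (\<Sum>p\<in>?S. if p dvd Suc N then ln (real p) else 0)"
    unfolding sum.distrib[symmetric] by (intro sum.cong refl) (simp add: algebra_simps)
  also have "(\<Sum>p\<in>?S. ln (real p) * real (N div p)) = (\<Sum>p\<in>{p. prime p \<and> p \<le> N}. ln (real p) * real (N div p))"
    by (rule sum.mono_neutral_right) (auto simp: le_Suc_eq)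
  also have "(\<Sum>p\<in>?S. if p dvd Suc N then ln (real p) else 0) = (\<Sum>p\<in>{p. prime p \<and> p dvd Suc N}. ln (real p))"
  proof -
    have "{p. prime p \<and> p dvd Suc N} = {p\<in>?S. p dvd Suc N}" using dvd_imp_le by auto
    moreover have "finite ?S" by simp
    ultimately show ?thesis by (simp only: sum.inter_filter)
  qed
  also have "\<dots> \<le> ln (real (Suc N))" by (rule sum_ln_prime_divisors_le) simp
  finally show ?case using Suc by simp
qed

lemma inverse_le_twice_quotient:
  fixes p N :: nat
  assumes "0 < p" "p \<le> N"
  shows "1 / real p \<le> 2 * real (N div p) / real N"
proof -
  have "N div p \<ge> 1" using div_le_mono[of p N p] assms by simp
  moreover have "N < p * (N div p + 1)"
    using assms(1) by (metis add.commute div_mult_mod_eq mod_less_divisor mult.commute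
        nat_add_left_cancel_less distrib_left mult_1_right)
  hence "real N < real p * (real (N div p) + 1)" by (metis of_nat_add of_nat_less_iff of_nat_mult of_nat_1)
  ultimately have "real N \<le> real p * (2 * real (N div p))"
    by (smt (verit, best) of_nat_1 of_nat_le_iff mult_left_mono of_nat_0_le_iff)
  thus ?thesis using assms by (simp add: field_simps)
qed

lemma sum_ln_prime_over_prime_le:
  assumes "y \<ge> 1"
  shows "(\<Sum>p\<in>{p. prime p \<and> real p \<le> y}. ln (real p) / real p) \<le> 2 * ln y"
proof -
  define N where "N = nat \<lfloor>y\<rfloor>"
  have N: "N \<ge> 1" "real N \<le> y" unfolding N_def using assms by linarith+
  have "real p \<le> y \<longleftrightarrow> p \<le> N" for p
    using N(2) unfolding N_def by (meson le_nat_floor of_nat_le_iff order_trans)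
  hence primes_eq: "{p. prime p \<and> real p \<le> y} = {p. prime p \<and> p \<le> N}" by blast
  \<comment> \<open>Chebyshev's device: \<open>1 / p \<le> 2 \<lfloor>N / p\<rfloor> / N\<close>, and \<open>\<Sum>\<^sub>p ln p \<lfloor>N / p\<rfloor> \<le> ln N!\<close>\<close>
  have "(\<Sum>p\<in>{p. prime p \<and> p \<le> N}. ln (real p) / real p)
      \<le> (\<Sum>p\<in>{p. prime p \<and> p \<le> N}. (2 / real N) * (ln (real p) * real (N div p)))"
  proof (intro sum_mono)
    fix p assume p: "p \<in> {p. prime p \<and> p \<le> N}"
    hence "ln (real p) * (1 / real p) \<le> ln (real p) * (2 * real (N div p) / real N)"
      using inverse_le_twice_quotient[of p N] prime_ge_1_nat by (intro mult_left_mono) auto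
    thus "ln (real p) / real p \<le> 2 / real N * (ln (real p) * real (N div p))"
      by (simp add: field_simps)
  qed
  also have "\<dots> = (2 / real N) * (\<Sum>p\<in>{p. prime p \<and> p \<le> N}. ln (real p) * real (N div p))"
    by (simp add: sum_distrib_left)
  also have "\<dots> \<le> (2 / real N) * (\<Sum>k\<in>{1..N}. ln (real N))"
    using sum_ln_prime_times_quotient_le[of N] sum_mono[of "{1..N}" "\<lambda>k. ln (real k)" "\<lambda>_. ln (real N)"]
    by (intro mult_left_mono) auto
  also have "\<dots> = 2 * ln (real N)" using N by simp
  also have "\<dots> \<le> 2 * ln y" using N by simp
  finally show ?thesis unfolding primes_eq .
qed

section \<open>Multiplicative weights and Euler factors\<close>

locale mult_weight =
  fixes x :: real and lam :: "nat \<Rightarrow> real"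
  assumes x_ge_1: "x \<ge> 1" and lam_nonneg: "\<And>n. lam n \<ge> 0" and lam_mult: "multiplicative lam"
begin

definition w :: "nat \<Rightarrow> real" where "w n = lam n / real n"

definition primes_x :: "nat set" where "primes_x = {p. prime p \<and> real p \<le> x}"

abbreviation smooth :: "nat set" where "smooth \<equiv> pp_smooth x primes_x"

definition euler_factor :: "nat \<Rightarrow> real" where
  "euler_factor p = (\<Sum>\<nu>\<in>exps_le x p. w (p ^ \<nu>))"

definition mass :: real where "mass = (\<Sum>n\<in>smooth. w n)"

definition partial_mass :: "real \<Rightarrow> real" where
  "partial_mass z = (\<Sum>n\<in>smooth. if real n \<le> z then w n else 0)"

definition euler_defect :: real where
  "euler_defect = (\<Sum>p\<in>primes_x. (euler_factor p - 1)\<^sup>2)"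

definition prime_power_pairs :: "(nat \<times> nat) set" where
  "prime_power_pairs = Sigma primes_x (\<lambda>p. exps_le x p - {0})"

text \<open>For real-valued \<open>t\<close>, \<open>pp_mean t\<close> and \<open>pp_second_moment t\<close> are the paper's
  \<open>\<Theta>(x)\<close> and \<open>\<SS>(x)\<close>.\<close>

definition pp_mean :: "(nat \<Rightarrow> real) \<Rightarrow> real" where
  "pp_mean t = (\<Sum>q\<in>{q. primepow q \<and> real q \<le> x}. w q * t q)"

definition pp_second_moment :: "(nat \<Rightarrow> real) \<Rightarrow> real" where
  "pp_second_moment t = (\<Sum>q\<in>{q. primepow q \<and> real q \<le> x}. w q * (t q)\<^sup>2)"

lemma w_nonneg: "w n \<ge> 0"
  unfolding w_def using lam_nonneg by simp

lemma w_1: "w 1 = 1"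
  using lam_mult unfolding w_def multiplicative_def by simp

lemma w_power_mult:
  assumes "prime p" "\<not> p dvd m"
  shows "w (p ^ \<nu> * m) = w (p ^ \<nu>) * w m"
proof -
  have "coprime (p ^ \<nu>) m" using prime_imp_coprime[OF assms] by simp
  hence "lam (p ^ \<nu> * m) = lam (p ^ \<nu>) * lam m" using lam_mult unfolding multiplicative_def by blast
  thus ?thesis unfolding w_def by simp
qed

lemma mass_nonneg: "mass \<ge> 0"
  unfolding mass_def by (intro sum_nonneg w_nonneg)

lemma pp_second_moment_nonneg: "pp_second_moment t \<ge> 0"
  unfolding pp_second_moment_def by (intro sum_nonneg mult_nonneg_nonneg w_nonneg) simp

lemma euler_defect_nonneg: "euler_defect \<ge> 0"
  unfolding euler_defect_def by (intro sum_nonneg) simp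

lemma finite_primes_x: "finite primes_x"
  unfolding primes_x_def by (rule finite_primes_le)

lemma prime_of_primes_x: "p \<in> primes_x \<Longrightarrow> prime p"
  unfolding primes_x_def by simp

lemma finite_smooth: "finite smooth"
  using finite_pp_smooth[OF finite_primes_x _ x_ge_1] prime_of_primes_x by blast

lemma smooth_ge_1: "n \<in> smooth \<Longrightarrow> real n \<ge> 1"
  using pp_smooth_pos by (fastforce simp: Suc_le_eq)

lemma sum_exps_le_remove_0:
  assumes "prime p" "f 1 = 0"
  shows "(\<Sum>\<nu>\<in>exps_le x p - {0}. f (p ^ \<nu>)) = (\<Sum>\<nu>\<in>exps_le x p. f (p ^ \<nu>))"
  using sum.remove[OF finite_exps_le[OF assms(1)] zero_in_exps_le[OF x_ge_1], of "\<lambda>\<nu>. f (p ^ \<nu>)"] assms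
  by simp

lemma euler_factor_minus_1:
  assumes "prime p"
  shows "euler_factor p - 1 = (\<Sum>\<nu>\<in>exps_le x p - {0}. w (p ^ \<nu>))"
  using sum.remove[OF finite_exps_le[OF assms] zero_in_exps_le[OF x_ge_1], of "\<lambda>\<nu>. w (p ^ \<nu>)"] w_1
  unfolding euler_factor_def by simp

lemma euler_factor_ge_1: "prime p \<Longrightarrow> euler_factor p \<ge> 1"
  using euler_factor_minus_1[of p] sum_nonneg[of "exps_le x p - {0}" "\<lambda>\<nu>. w (p ^ \<nu>)"] w_nonneg
  by simp

lemma sum_w_pp_smooth:
  assumes "finite P" "\<forall>p\<in>P. prime p"
  shows "(\<Sum>n\<in>pp_smooth x P. w n) = (\<Prod>p\<in>P. euler_factor p)"
  using assms
proof (induction P rule: finite_induct)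
  case empty thus ?case using w_1 by (simp add: pp_smooth_empty)
next
  case (insert p P)
  hence p: "prime p" by simp
  have "(\<Sum>n\<in>pp_smooth x (insert p P). w n) = (\<Sum>\<nu>\<in>exps_le x p. \<Sum>m\<in>pp_smooth x P. w (p ^ \<nu>) * w m)"
    unfolding sum_pp_smooth_insert[OF p insert(2) x_ge_1]
    using w_power_mult[OF p] pp_smooth_not_dvd[OF p insert(2)] by (intro sum.cong) auto
  also have "\<dots> = euler_factor p * (\<Sum>m\<in>pp_smooth x P. w m)"
    unfolding euler_factor_def by (simp add: sum_product)
  finally show ?case using insert by simp
qed

lemma mass_eq_prod: "mass = (\<Prod>p\<in>primes_x. euler_factor p)"
  unfolding mass_def using finite_primes_x prime_of_primes_x by (intro sum_w_pp_smooth) auto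

lemma partial_mass_mono: "z \<le> z' \<Longrightarrow> partial_mass z \<le> partial_mass z'"
  unfolding partial_mass_def by (intro sum_mono) (auto simp: w_nonneg)

lemma partial_mass_nonneg: "partial_mass z \<ge> 0"
  unfolding partial_mass_def by (intro sum_nonneg) (auto simp: w_nonneg)

lemma partial_mass_x: "partial_mass x = (\<Sum>n\<in>{n. 1 \<le> n \<and> real n \<le> x}. w n)"
proof -
  have "partial_mass x = (\<Sum>n\<in>{n\<in>smooth. real n \<le> x}. w n)"
    unfolding partial_mass_def by (rule sum.inter_filter[OF finite_smooth, symmetric])
  also have "{n\<in>smooth. real n \<le> x} = {n. 1 \<le> n \<and> real n \<le> x}"
    using upto_subset_pp_smooth[of x] smooth_ge_1 unfolding primes_x_def by fastforce
  finally show ?thesis .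
qed

lemma partial_mass_x_ge_1: "partial_mass x \<ge> 1"
proof -
  have "1 \<in> smooth" unfolding pp_smooth_def by auto
  hence "(if real 1 \<le> x then w 1 else 0) \<le> partial_mass x"
    unfolding partial_mass_def by (rule member_le_sum) (auto simp: w_nonneg finite_smooth)
  thus ?thesis using x_ge_1 w_1 by simp
qed

lemma bij_betw_prime_power:
  "bij_betw (\<lambda>(p, \<nu>). p ^ \<nu>) prime_power_pairs {q. primepow q \<and> real q \<le> x}"
proof (rule bij_betwI')
  fix i j assume "i \<in> prime_power_pairs" "j \<in> prime_power_pairs"
  thus "((case i of (p, \<nu>) \<Rightarrow> p ^ \<nu>) = (case j of (p, \<nu>) \<Rightarrow> p ^ \<nu>)) = (i = j)"
    using prime_power_inj' unfolding prime_power_pairs_def primes_x_def by auto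
next
  fix i assume "i \<in> prime_power_pairs"
  thus "(case i of (p, \<nu>) \<Rightarrow> p ^ \<nu>) \<in> {q. primepow q \<and> real q \<le> x}"
    unfolding prime_power_pairs_def primes_x_def exps_le_def by (auto simp: primepow_def)
next
  fix q assume "q \<in> {q. primepow q \<and> real q \<le> x}"
  then obtain p k where q: "prime p" "k > 0" "q = p ^ k" "real q \<le> x" by (auto simp: primepow_def)
  have "p \<le> p ^ k" using q prime_ge_1_nat by (intro self_le_power) auto
  hence "real p \<le> x" using q by (metis of_nat_le_iff order_trans)
  hence "(p, k) \<in> prime_power_pairs"
    using q unfolding prime_power_pairs_def primes_x_def exps_le_def by simp
  thus "\<exists>i\<in>prime_power_pairs. q = (case i of (p, \<nu>) \<Rightarrow> p ^ \<nu>)"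
    using q(3) by force
qed

lemma sum_prime_power_pairs_reindex:
  "(\<Sum>(p, \<nu>)\<in>prime_power_pairs. f (p ^ \<nu>)) = (\<Sum>q\<in>{q. primepow q \<and> real q \<le> x}. f q)"
  using sum.reindex_bij_betw[OF bij_betw_prime_power, of f] by (simp add: case_prod_unfold)

lemma sum_prime_power_pairs_Sigma:
  "(\<Sum>(p, \<nu>)\<in>prime_power_pairs. g p \<nu>) = (\<Sum>p\<in>primes_x. \<Sum>\<nu>\<in>exps_le x p - {0}. g p \<nu>)"
  unfolding prime_power_pairs_def using finite_primes_x finite_exps_le prime_of_primes_x
  by (intro sum.Sigma[symmetric]) auto

lemma sum_primepow_eq:
  assumes "f 1 = 0"
  shows "(\<Sum>q\<in>{q. primepow q \<and> real q \<le> x}. f q) = (\<Sum>p\<in>primes_x. \<Sum>\<nu>\<in>exps_le x p. f (p ^ \<nu>))"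
  unfolding sum_prime_power_pairs_reindex[symmetric] sum_prime_power_pairs_Sigma
  using assms prime_of_primes_x by (intro sum.cong refl sum_exps_le_remove_0) auto

definition log_mass :: "real \<Rightarrow> real" where
  "log_mass y = (\<Sum>p\<in>primes_x. \<Sum>\<nu>\<in>exps_le x p.
                   if real (p ^ \<nu>) \<le> y then w (p ^ \<nu>) * ln (real (p ^ \<nu>)) else 0)"

lemma w_ln_nonneg: "prime p \<Longrightarrow> w (p ^ \<nu>) * ln (real (p ^ \<nu>)) \<ge> 0"
  using w_nonneg prime_gt_0_nat by (intro mult_nonneg_nonneg) (auto simp: Suc_le_eq)

lemma log_mass_prime_summand_le:
  assumes "p \<in> primes_x"
  shows "(\<Sum>\<nu>\<in>exps_le x p. if real (p ^ \<nu>) \<le> y then w (p ^ \<nu>) * ln (real (p ^ \<nu>)) else 0)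
      \<le> (if real p \<le> y then w p * ln (real p) else 0)
          + (\<Sum>\<nu>\<in>{\<nu>\<in>exps_le x p. 2 \<le> \<nu>}. w (p ^ \<nu>) * ln (real (p ^ \<nu>)))"
proof -
  have p: "prime p" "real p \<le> x" using assms unfolding primes_x_def by auto
  have "(\<Sum>\<nu>\<in>{\<nu>\<in>exps_le x p. 2 \<le> \<nu>}. if real (p ^ \<nu>) \<le> y then w (p ^ \<nu>) * ln (real (p ^ \<nu>)) else 0)
      \<le> (\<Sum>\<nu>\<in>{\<nu>\<in>exps_le x p. 2 \<le> \<nu>}. w (p ^ \<nu>) * ln (real (p ^ \<nu>)))"
    using w_ln_nonneg[OF p(1)] by (intro sum_mono) auto
  thus ?thesis unfolding sum_exps_le_split[OF p x_ge_1] by simp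
qed

lemma log_mass_le_log_mass_x: "log_mass y \<le> log_mass x"
  unfolding log_mass_def using w_ln_nonneg prime_of_primes_x
  by (intro sum_mono) (auto simp: exps_le_def)

lemma log_mass_eq_0:
  assumes "y < 1"
  shows "log_mass y = 0"
proof -
  have "\<not> real (p ^ \<nu>) \<le> y" if "p \<in> primes_x" for p \<nu>
  proof -
    have "real (p ^ \<nu>) \<ge> 1"
      using prime_gt_0_nat[OF prime_of_primes_x[OF that]] by (simp add: Suc_le_eq)
    thus ?thesis using assms by linarith
  qed
  thus ?thesis unfolding log_mass_def by (intro sum.neutral ballI) simp
qed

lemma sum_w_ln_prime_part_le:
  assumes p: "p \<in> primes_x"
  shows "(\<Sum>n\<in>smooth. if real n \<le> z then w n * ln (real (p ^ multiplicity p n)) else 0)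
     \<le> (\<Sum>\<nu>\<in>exps_le x p. w (p ^ \<nu>) * ln (real (p ^ \<nu>))
            * (\<Sum>m\<in>smooth. if real (p ^ \<nu>) * real m \<le> z then w m else 0))"
proof -
  have pp: "prime p" "p \<notin> primes_x - {p}" using prime_of_primes_x[OF p] by auto
  have "(\<Sum>n\<in>smooth. if real n \<le> z then w n * ln (real (p ^ multiplicity p n)) else 0)
     = (\<Sum>\<nu>\<in>exps_le x p. \<Sum>m\<in>pp_smooth x (primes_x - {p}).
          if real (p ^ \<nu> * m) \<le> z then w (p ^ \<nu> * m) * ln (real (p ^ multiplicity p (p ^ \<nu> * m))) else 0)"
    using p by (subst insert_Diff[OF p, symmetric], subst sum_pp_smooth_insert[OF pp x_ge_1]) auto
  also have "\<dots> = (\<Sum>\<nu>\<in>exps_le x p. w (p ^ \<nu>) * ln (real (p ^ \<nu>))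
          * (\<Sum>m\<in>pp_smooth x (primes_x - {p}). if real (p ^ \<nu>) * real m \<le> z then w m else 0))"
    unfolding sum_distrib_left
  proof (intro sum.cong refl)
    fix \<nu> m assume "m \<in> pp_smooth x (primes_x - {p})"
    hence pm: "\<not> p dvd m" using pp_smooth_not_dvd[OF pp] by blast
    show "(if real (p ^ \<nu> * m) \<le> z then w (p ^ \<nu> * m) * ln (real (p ^ multiplicity p (p ^ \<nu> * m))) else 0)
       = w (p ^ \<nu>) * ln (real (p ^ \<nu>)) * (if real (p ^ \<nu>) * real m \<le> z then w m else 0)"
      using w_power_mult[OF pp(1) pm] multiplicity_decomposeI[OF _ pm, of "p ^ \<nu> * m" \<nu>] pp(1)
      by simp
  qed
  also have "\<dots> \<le> (\<Sum>\<nu>\<in>exps_le x p. w (p ^ \<nu>) * ln (real (p ^ \<nu>))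
                  * (\<Sum>m\<in>smooth. if real (p ^ \<nu>) * real m \<le> z then w m else 0))"
    by (intro sum_mono mult_left_mono w_ln_nonneg[OF pp(1)] sum_mono2 finite_smooth pp_smooth_mono)
      (auto simp: w_nonneg)
  finally show ?thesis .
qed

lemma sum_w_ln_le_log_mass:
  "(\<Sum>n\<in>smooth. if real n \<le> z then w n * ln (real n) else 0)
     \<le> (\<Sum>m\<in>smooth. w m * log_mass (z / real m))"
proof -
  have "(\<Sum>n\<in>smooth. if real n \<le> z then w n * ln (real n) else 0)
      = (\<Sum>n\<in>smooth. \<Sum>p\<in>primes_x. if real n \<le> z then w n * ln (real (p ^ multiplicity p n)) else 0)"
  proof (intro sum.cong refl)
    fix n assume n: "n \<in> smooth"
    have "prime_factors n \<subseteq> primes_x"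
      using n unfolding pp_smooth_def by (auto simp: in_prime_factors_iff)
    hence "ln (real n) = (\<Sum>p\<in>primes_x. ln (real (p ^ multiplicity p n)))"
      using pp_smooth_pos[OF n] finite_primes_x prime_of_primes_x
      by (intro ln_eq_sum_ln_prime_power_parts) auto
    thus "(if real n \<le> z then w n * ln (real n) else 0)
        = (\<Sum>p\<in>primes_x. if real n \<le> z then w n * ln (real (p ^ multiplicity p n)) else 0)"
      by (simp add: sum_distrib_left)
  qed
  also have "\<dots> = (\<Sum>p\<in>primes_x. \<Sum>n\<in>smooth. if real n \<le> z then w n * ln (real (p ^ multiplicity p n)) else 0)"
    by (rule sum.swap)
  also have "\<dots> \<le> (\<Sum>p\<in>primes_x. \<Sum>\<nu>\<in>exps_le x p. w (p ^ \<nu>) * ln (real (p ^ \<nu>))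
                    * (\<Sum>m\<in>smooth. if real (p ^ \<nu>) * real m \<le> z then w m else 0))"
    by (intro sum_mono sum_w_ln_prime_part_le)
  also have "\<dots> = (\<Sum>p\<in>primes_x. \<Sum>\<nu>\<in>exps_le x p. \<Sum>m\<in>smooth.
        w m * (if real (p ^ \<nu>) * real m \<le> z then w (p ^ \<nu>) * ln (real (p ^ \<nu>)) else 0))"
    by (intro sum.cong refl) (simp add: sum_distrib_left mult_ac if_distrib cong: if_cong)
  also have "\<dots> = (\<Sum>m\<in>smooth. \<Sum>p\<in>primes_x. \<Sum>\<nu>\<in>exps_le x p.
        w m * (if real (p ^ \<nu>) * real m \<le> z then w (p ^ \<nu>) * ln (real (p ^ \<nu>)) else 0))"
    by (subst sum.swap, subst sum.swap) (intro sum.cong refl sum.swap)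
  also have "\<dots> = (\<Sum>m\<in>smooth. w m * log_mass (z / real m))"
    unfolding log_mass_def sum_distrib_left using pp_smooth_pos
    by (intro sum.cong refl) (simp add: pos_le_divide_eq)
  finally show ?thesis .
qed

lemma sum_w_ln_ratio_le:
  assumes z: "1 \<le> z" "z \<le> z'"
  shows "(\<Sum>n\<in>smooth. if real n \<le> z' then w n * ln (z' / real n) else 0)
           \<le> partial_mass z * ln z' + (partial_mass z' - partial_mass z) * ln (z' / z)"
proof -
  have "(if real n \<le> z' then w n * ln (z' / real n) else 0)
     \<le> (if real n \<le> z then w n else 0) * ln z'
        + ((if real n \<le> z' then w n else 0) - (if real n \<le> z then w n else 0)) * ln (z' / z)"
    if n: "n \<in> smooth" for n
  proof -
    have n1: "real n \<ge> 1" using smooth_ge_1[OF n] .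
    consider "real n \<le> z" | "z < real n" "real n \<le> z'" | "z' < real n" by linarith
    thus ?thesis
    proof cases
      case 1
      have "ln (z' / real n) \<le> ln z'" using n1 z by (simp add: ln_div)
      thus ?thesis using 1 z w_nonneg[of n] by (simp add: mult_left_mono)
    next
      case 2
      have "ln (z' / real n) \<le> ln (z' / z)"
        using 2 z n1 by (subst ln_le_cancel_iff) (auto intro: divide_left_mono)
      thus ?thesis using 2 w_nonneg[of n] by (simp add: mult_left_mono)
    qed (use z in auto)
  qed
  hence "(\<Sum>n\<in>smooth. if real n \<le> z' then w n * ln (z' / real n) else 0)
      \<le> (\<Sum>n\<in>smooth. (if real n \<le> z then w n else 0) * ln z'
            + ((if real n \<le> z' then w n else 0) - (if real n \<le> z then w n else 0)) * ln (z' / z))"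
    by (rule sum_mono)
  also have "\<dots> = partial_mass z * ln z' + (partial_mass z' - partial_mass z) * ln (z' / z)"
    unfolding partial_mass_def
    by (simp add: sum.distrib sum_distrib_right[symmetric] sum_subtractf[symmetric])
  finally show ?thesis .
qed

end

section \<open>Variance of an additive function\<close>

locale mult_weight_additive = mult_weight +
  fixes t :: "nat \<Rightarrow> real"
  assumes t_additive: "additive t"
begin

definition local_mean :: "nat \<Rightarrow> real" where
  "local_mean p = (\<Sum>\<nu>\<in>exps_le x p. w (p ^ \<nu>) * t (p ^ \<nu>)) / euler_factor p"

definition local_var :: "nat \<Rightarrow> real" where
  "local_var p = (\<Sum>\<nu>\<in>exps_le x p. w (p ^ \<nu>) * (t (p ^ \<nu>) - local_mean p)\<^sup>2) / euler_factor p"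

lemma t_1: "t 1 = 0"
  using t_additive unfolding additive_def by (metis add_cancel_left_left coprime_1_left mult_1)

lemma t_power_mult:
  assumes "prime p" "\<not> p dvd m"
  shows "t (p ^ \<nu> * m) = t (p ^ \<nu>) + t m"
  using prime_imp_coprime[OF assms] t_additive unfolding additive_def by simp

lemma sum_local_deviation:
  assumes "prime p"
  shows "(\<Sum>\<nu>\<in>exps_le x p. w (p ^ \<nu>) * (t (p ^ \<nu>) - local_mean p)) = 0"
proof -
  have "(\<Sum>\<nu>\<in>exps_le x p. w (p ^ \<nu>) * (t (p ^ \<nu>) - local_mean p))
     = (\<Sum>\<nu>\<in>exps_le x p. w (p ^ \<nu>) * t (p ^ \<nu>)) - local_mean p * euler_factor p"
    unfolding euler_factor_def by (simp add: algebra_simps sum_subtractf sum_distrib_left)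
  thus ?thesis unfolding local_mean_def using euler_factor_ge_1[OF assms] by simp
qed

lemma sum_local_sq_deviation:
  "prime p \<Longrightarrow> (\<Sum>\<nu>\<in>exps_le x p. w (p ^ \<nu>) * (t (p ^ \<nu>) - local_mean p)\<^sup>2) = euler_factor p * local_var p"
  using euler_factor_ge_1[of p] unfolding local_var_def by simp

lemma local_var_le:
  assumes "prime p"
  shows "local_var p \<le> (\<Sum>\<nu>\<in>exps_le x p. w (p ^ \<nu>) * (t (p ^ \<nu>))\<^sup>2)"
    (is "_ \<le> ?s")
proof -
  have Z: "euler_factor p \<ge> 1" using euler_factor_ge_1[OF assms] .
  have s: "?s \<ge> 0" by (intro sum_nonneg mult_nonneg_nonneg w_nonneg) simp
  have "(\<Sum>\<nu>\<in>exps_le x p. w (p ^ \<nu>) * (t (p ^ \<nu>) - local_mean p)\<^sup>2)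
      = (\<Sum>\<nu>\<in>exps_le x p. w (p ^ \<nu>) * (t (p ^ \<nu>))\<^sup>2 - 2 * local_mean p * (w (p ^ \<nu>) * t (p ^ \<nu>))
          + (local_mean p)\<^sup>2 * w (p ^ \<nu>))"
    by (intro sum.cong refl) (simp add: power2_eq_square algebra_simps)
  also have "\<dots> = ?s - 2 * local_mean p * (\<Sum>\<nu>\<in>exps_le x p. w (p ^ \<nu>) * t (p ^ \<nu>))
      + (local_mean p)\<^sup>2 * euler_factor p"
    unfolding euler_factor_def by (simp add: sum.distrib sum_subtractf sum_distrib_left)
  also have "(\<Sum>\<nu>\<in>exps_le x p. w (p ^ \<nu>) * t (p ^ \<nu>)) = local_mean p * euler_factor p"
    unfolding local_mean_def using Z by simp
  finally have "euler_factor p * local_var p = ?s - (local_mean p)\<^sup>2 * euler_factor p"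
    using sum_local_sq_deviation[OF assms] by (simp add: power2_eq_square algebra_simps)
  hence "euler_factor p * local_var p \<le> ?s" using Z by simp
  hence "local_var p \<le> ?s / euler_factor p" using Z by (simp add: field_simps)
  also have "\<dots> \<le> ?s" using Z s by (simp add: divide_le_eq mult_le_cancel_left1)
  finally show ?thesis .
qed

lemma pp_smooth_deviation_split:
  assumes p: "prime p" "p \<notin> P" and m: "m \<in> pp_smooth x P"
  shows "w (p ^ \<nu> * m) = w (p ^ \<nu>) * w m"
    and "t (p ^ \<nu> * m) - (local_mean p + c) = (t (p ^ \<nu>) - local_mean p) + (t m - c)"
  using w_power_mult[OF p(1)] t_power_mult[OF p(1)] pp_smooth_not_dvd[OF p m] by simp_all

lemma sum_pp_smooth_deviation:
  assumes "finite P" "\<forall>p\<in>P. prime p"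
  shows "(\<Sum>n\<in>pp_smooth x P. w n * (t n - (\<Sum>p\<in>P. local_mean p))) = 0"
  using assms
proof (induction P rule: finite_induct)
  case empty thus ?case using t_1 by (simp add: pp_smooth_empty)
next
  case (insert p P)
  hence p: "prime p" by simp
  define c where "c = (\<Sum>p\<in>P. local_mean p)"
  have "(\<Sum>n\<in>pp_smooth x (insert p P). w n * (t n - (\<Sum>p\<in>insert p P. local_mean p)))
    = (\<Sum>\<nu>\<in>exps_le x p. \<Sum>m\<in>pp_smooth x P. w (p ^ \<nu>) * w m * ((t (p ^ \<nu>) - local_mean p) + (t m - c)))"
    unfolding sum_pp_smooth_insert[OF p insert(2) x_ge_1] using insert(1,2)
    by (intro sum.cong refl) (simp add: pp_smooth_deviation_split[OF p insert(2)] c_def)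
  also have "\<dots> = 0"
    unfolding double_sum_weighted_add using sum_local_deviation[OF p] insert by (simp add: c_def)
  finally show ?case .
qed

lemma sum_pp_smooth_sq_deviation:
  assumes "finite P" "\<forall>p\<in>P. prime p"
  shows "(\<Sum>n\<in>pp_smooth x P. w n * (t n - (\<Sum>p\<in>P. local_mean p))\<^sup>2)
           = (\<Prod>p\<in>P. euler_factor p) * (\<Sum>p\<in>P. local_var p)"
  using assms
proof (induction P rule: finite_induct)
  case empty thus ?case using w_1 t_1 by (simp add: pp_smooth_empty)
next
  case (insert p P)
  hence p: "prime p" by simp
  define c where "c = (\<Sum>p\<in>P. local_mean p)"
  have "(\<Sum>n\<in>pp_smooth x (insert p P). w n * (t n - (\<Sum>p\<in>insert p P. local_mean p))\<^sup>2)
    = (\<Sum>\<nu>\<in>exps_le x p. \<Sum>m\<in>pp_smooth x P. w (p ^ \<nu>) * w m * ((t (p ^ \<nu>) - local_mean p) + (t m - c))\<^sup>2)"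
    unfolding sum_pp_smooth_insert[OF p insert(2) x_ge_1] using insert(1,2)
    by (intro sum.cong refl) (simp add: pp_smooth_deviation_split[OF p insert(2)] c_def)
  also have "\<dots> = euler_factor p * local_var p * (\<Prod>p\<in>P. euler_factor p)
      + euler_factor p * ((\<Prod>p\<in>P. euler_factor p) * (\<Sum>p\<in>P. local_var p))"
    unfolding double_sum_weighted_add_square
    using sum_local_deviation[OF p] sum_local_sq_deviation[OF p] insert
      sum_w_pp_smooth sum_pp_smooth_deviation
    unfolding c_def euler_factor_def by simp
  also have "\<dots> = (\<Prod>p\<in>insert p P. euler_factor p) * (\<Sum>p\<in>insert p P. local_var p)"
    using insert by (simp add: algebra_simps)
  finally show ?case .
qed

lemma sum_local_mean_minus_pp_mean:
  "(\<Sum>p\<in>primes_x. local_mean p) - pp_mean t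
     = - (\<Sum>(p, \<nu>)\<in>prime_power_pairs. w (p ^ \<nu>) * (1 - 1 / euler_factor p) * t (p ^ \<nu>))"
proof -
  have "local_mean p = (\<Sum>\<nu>\<in>exps_le x p - {0}. w (p ^ \<nu>) * t (p ^ \<nu>) / euler_factor p)"
    if "p \<in> primes_x" for p
    using sum_exps_le_remove_0[of p "\<lambda>n. w n * t n / euler_factor p"] t_1 prime_of_primes_x[OF that]
    by (simp add: local_mean_def sum_divide_distrib)
  hence "(\<Sum>p\<in>primes_x. local_mean p)
      = (\<Sum>(p, \<nu>)\<in>prime_power_pairs. w (p ^ \<nu>) * t (p ^ \<nu>) / euler_factor p)"
    unfolding sum_prime_power_pairs_Sigma by simp
  moreover have "pp_mean t = (\<Sum>(p, \<nu>)\<in>prime_power_pairs. w (p ^ \<nu>) * t (p ^ \<nu>))"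
    unfolding pp_mean_def sum_prime_power_pairs_reindex[of "\<lambda>q. w q * t q", symmetric] ..
  ultimately show ?thesis
    by (simp add: sum_subtractf[symmetric] sum_negf[symmetric] case_prod_unfold algebra_simps
        diff_divide_distrib)
qed

lemma sum_prime_power_pairs_defect_sq_le:
  "(\<Sum>(p, \<nu>)\<in>prime_power_pairs. w (p ^ \<nu>) * (1 - 1 / euler_factor p)\<^sup>2) \<le> euler_defect"
proof -
  have "(\<Sum>(p, \<nu>)\<in>prime_power_pairs. w (p ^ \<nu>) * (1 - 1 / euler_factor p)\<^sup>2)
      = (\<Sum>p\<in>primes_x. (euler_factor p - 1) * (1 - 1 / euler_factor p)\<^sup>2)"
    unfolding sum_prime_power_pairs_Sigma using euler_factor_minus_1 prime_of_primes_x
    by (intro sum.cong refl) (simp add: sum_distrib_right)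
  also have "\<dots> \<le> euler_defect"
    unfolding euler_defect_def power2_eq_square[of "euler_factor _ - 1"]
    using euler_factor_ge_1 prime_of_primes_x one_minus_inverse_sq_le
    by (intro sum_mono mult_left_mono) auto
  finally show ?thesis .
qed

lemma pp_mean_shift_sq_le:
  "((\<Sum>p\<in>primes_x. local_mean p) - pp_mean t)\<^sup>2 \<le> euler_defect * pp_second_moment t"
proof -
  define r where "r p = 1 - 1 / euler_factor p" for p
  have "((\<Sum>p\<in>primes_x. local_mean p) - pp_mean t)\<^sup>2
      = (\<Sum>(p, \<nu>)\<in>prime_power_pairs. w (p ^ \<nu>) * r p * t (p ^ \<nu>))\<^sup>2"
    unfolding sum_local_mean_minus_pp_mean r_def by simp
  also have "\<dots> \<le> (\<Sum>(p, \<nu>)\<in>prime_power_pairs. w (p ^ \<nu>) * (r p)\<^sup>2)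
                 * (\<Sum>(p, \<nu>)\<in>prime_power_pairs. w (p ^ \<nu>) * (t (p ^ \<nu>))\<^sup>2)"
    using weighted_Cauchy_Schwarz[of prime_power_pairs "\<lambda>i. w (fst i ^ snd i)" "\<lambda>i. r (fst i)"
        "\<lambda>i. t (fst i ^ snd i)"] w_nonneg
    by (simp add: case_prod_unfold)
  also have "(\<Sum>(p, \<nu>)\<in>prime_power_pairs. w (p ^ \<nu>) * (t (p ^ \<nu>))\<^sup>2) = pp_second_moment t"
    unfolding pp_second_moment_def by (rule sum_prime_power_pairs_reindex)
  finally show ?thesis
    using sum_prime_power_pairs_defect_sq_le pp_second_moment_nonneg unfolding r_def
    by (meson mult_right_mono order_trans)
qed

lemma variance_pp_smooth_le:
  "(\<Sum>n\<in>smooth. w n * (t n - pp_mean t)\<^sup>2) \<le> mass * (1 + euler_defect) * pp_second_moment t"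
proof -
  define c where "c = (\<Sum>p\<in>primes_x. local_mean p)"
  have centered: "(\<Sum>n\<in>smooth. w n * (t n - c)) = 0"
    and var: "(\<Sum>n\<in>smooth. w n * (t n - c)\<^sup>2) = mass * (\<Sum>p\<in>primes_x. local_var p)"
    using sum_pp_smooth_deviation sum_pp_smooth_sq_deviation finite_primes_x prime_of_primes_x
    unfolding c_def mass_eq_prod by auto
  have "(\<Sum>n\<in>smooth. w n * (t n - pp_mean t)\<^sup>2)
      = (\<Sum>n\<in>smooth. w n * (t n - c)\<^sup>2 + 2 * (c - pp_mean t) * (w n * (t n - c))
          + (c - pp_mean t)\<^sup>2 * w n)"
    by (intro sum.cong refl) (simp add: power2_eq_square algebra_simps)
  also have "\<dots> = mass * (\<Sum>p\<in>primes_x. local_var p) + (c - pp_mean t)\<^sup>2 * mass"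
    using centered var unfolding mass_def by (simp add: sum.distrib sum_distrib_left[symmetric])
  also have "(\<Sum>p\<in>primes_x. local_var p) \<le> pp_second_moment t"
  proof -
    have "pp_second_moment t = (\<Sum>p\<in>primes_x. \<Sum>\<nu>\<in>exps_le x p. w (p ^ \<nu>) * (t (p ^ \<nu>))\<^sup>2)"
      unfolding pp_second_moment_def using t_1 by (intro sum_primepow_eq) simp
    thus ?thesis by (auto intro!: sum_mono local_var_le prime_of_primes_x)
  qed
  also have "(c - pp_mean t)\<^sup>2 \<le> euler_defect * pp_second_moment t"
    unfolding c_def by (rule pp_mean_shift_sq_le)
  finally show ?thesis
    using mass_nonneg pp_second_moment_nonneg by (simp add: algebra_simps mult_left_mono mult_right_mono)
qed

end

section \<open>Weights of class M(x; A, B)\<close>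

definition mass_constant :: "real \<Rightarrow> real \<Rightarrow> real" where
  "mass_constant A B = max (2 * (12 * A + 6) ^ nat \<lceil>4 * A * (4 * A + 2)\<rceil>) ((1 + A + B / ln 4) ^ nat \<lceil>exp (4 * B)\<rceil>)"

lemma mass_constant_pos: "A > 0 \<Longrightarrow> mass_constant A B > 0"
  unfolding mass_constant_def by (simp add: less_max_iff_disj)

definition variance_constant :: "real \<Rightarrow> real \<Rightarrow> real" where
  "variance_constant A B = (1 + 2 * A\<^sup>2 + 2 * (B / ln 4)\<^sup>2) * mass_constant A B"

lemma variance_constant_pos: "A > 0 \<Longrightarrow> variance_constant A B > 0"
  unfolding variance_constant_def using mass_constant_pos by (simp add: add_pos_nonneg)

locale classM_weight = mult_weight +
  fixes A B :: real
  assumes A_pos: "A > 0" and B_pos: "B > 0"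
    and lam_prime_le: "\<And>p. prime p \<Longrightarrow> real p \<le> x \<Longrightarrow> lam p \<le> A"
    and lam_higher_powers_le: "(\<Sum>(p, \<nu>)\<in>{(p, \<nu>). prime p \<and> 2 \<le> \<nu> \<and> real (p ^ \<nu>) \<le> x}.
          lam (p ^ \<nu>) * ln (real (p ^ \<nu>)) / real (p ^ \<nu>)) \<le> B"
begin

definition higher_mass :: "nat \<Rightarrow> real" where
  "higher_mass p = (\<Sum>\<nu>\<in>{\<nu>\<in>exps_le x p. 2 \<le> \<nu>}. w (p ^ \<nu>))"

lemma w_prime_le: "p \<in> primes_x \<Longrightarrow> w p \<le> A / real p"
  using lam_prime_le unfolding w_def primes_x_def by (auto simp: divide_right_mono)

lemma higher_mass_nonneg: "higher_mass p \<ge> 0"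
  unfolding higher_mass_def by (intro sum_nonneg w_nonneg)

lemma euler_factor_minus_1_eq:
  assumes "p \<in> primes_x"
  shows "euler_factor p - 1 = w p + higher_mass p"
proof -
  have p: "prime p" "real p \<le> x" using assms unfolding primes_x_def by auto
  have "exps_le x p - {0} = insert 1 {\<nu>\<in>exps_le x p. 2 \<le> \<nu>}"
    using p unfolding exps_le_def by auto
  thus ?thesis
    using euler_factor_minus_1[OF p(1)] finite_exps_le[OF p(1)] unfolding higher_mass_def by simp
qed

lemma higher_powers_eq_Sigma:
  "{(p, \<nu>). prime p \<and> 2 \<le> \<nu> \<and> real (p ^ \<nu>) \<le> x} = Sigma primes_x (\<lambda>p. {\<nu>\<in>exps_le x p. 2 \<le> \<nu>})"
proof safe
  fix p \<nu> :: nat assume h: "prime p" "2 \<le> \<nu>" "real (p ^ \<nu>) \<le> x"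
  have "p \<le> p ^ \<nu>" using h prime_ge_1_nat by (intro self_le_power) auto
  hence "real p \<le> x" using h by (meson of_nat_le_iff order_trans)
  thus "p \<in> primes_x" unfolding primes_x_def using h by auto
qed (auto simp: primes_x_def exps_le_def)

lemma sum_higher_log_mass_le:
  "(\<Sum>p\<in>primes_x. \<Sum>\<nu>\<in>{\<nu>\<in>exps_le x p. 2 \<le> \<nu>}. w (p ^ \<nu>) * ln (real (p ^ \<nu>))) \<le> B"
proof -
  have "(\<Sum>p\<in>primes_x. \<Sum>\<nu>\<in>{\<nu>\<in>exps_le x p. 2 \<le> \<nu>}. w (p ^ \<nu>) * ln (real (p ^ \<nu>)))
     = (\<Sum>(p, \<nu>)\<in>Sigma primes_x (\<lambda>p. {\<nu>\<in>exps_le x p. 2 \<le> \<nu>}). w (p ^ \<nu>) * ln (real (p ^ \<nu>)))"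
    using finite_primes_x finite_exps_le prime_of_primes_x by (intro sum.Sigma) auto
  also have "\<dots> = (\<Sum>(p, \<nu>)\<in>{(p, \<nu>). prime p \<and> 2 \<le> \<nu> \<and> real (p ^ \<nu>) \<le> x}.
          lam (p ^ \<nu>) * ln (real (p ^ \<nu>)) / real (p ^ \<nu>))"
    unfolding higher_powers_eq_Sigma w_def by (simp add: case_prod_unfold)
  finally show ?thesis using lam_higher_powers_le by simp
qed

lemma sum_higher_mass_le: "(\<Sum>p\<in>primes_x. higher_mass p) \<le> B / ln 4"
proof -
  have "higher_mass p \<le> (\<Sum>\<nu>\<in>{\<nu>\<in>exps_le x p. 2 \<le> \<nu>}. w (p ^ \<nu>) * ln (real (p ^ \<nu>))) / ln 4"
    if "p \<in> primes_x" for p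
    unfolding higher_mass_def sum_divide_distrib
  proof (intro sum_mono)
    fix \<nu> assume "\<nu> \<in> {\<nu>\<in>exps_le x p. 2 \<le> \<nu>}"
    hence "(2::nat) ^ 2 \<le> 2 ^ \<nu>" by (intro power_increasing) auto
    also have "\<dots> \<le> p ^ \<nu>" using prime_ge_2_nat[OF prime_of_primes_x[OF that]] by (rule power_mono) simp
    finally have "real (4::nat) \<le> real (p ^ \<nu>)" by (simp only: of_nat_le_iff) simp
    hence "ln 4 \<le> ln (real (p ^ \<nu>))"
      using prime_gt_0_nat[OF prime_of_primes_x[OF that]] by (subst ln_le_cancel_iff) auto
    thus "w (p ^ \<nu>) \<le> w (p ^ \<nu>) * ln (real (p ^ \<nu>)) / ln 4"
      using w_nonneg[of "p ^ \<nu>"] by (simp add: field_simps mult_left_mono)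
  qed
  hence "(\<Sum>p\<in>primes_x. higher_mass p)
      \<le> (\<Sum>p\<in>primes_x. \<Sum>\<nu>\<in>{\<nu>\<in>exps_le x p. 2 \<le> \<nu>}. w (p ^ \<nu>) * ln (real (p ^ \<nu>))) / ln 4"
    unfolding sum_divide_distrib by (rule sum_mono)
  also have "\<dots> \<le> B / ln 4" using sum_higher_log_mass_le by (simp add: divide_right_mono)
  finally show ?thesis .
qed

lemma higher_mass_le: "p \<in> primes_x \<Longrightarrow> higher_mass p \<le> B / ln 4"
  using member_le_sum[of p primes_x higher_mass] higher_mass_nonneg finite_primes_x sum_higher_mass_le
  by fastforce

lemma euler_defect_le: "euler_defect \<le> 2 * A\<^sup>2 + 2 * (B / ln 4)\<^sup>2"
proof -
  have "(euler_factor p - 1)\<^sup>2 \<le> 2 * A\<^sup>2 * (1 / (real p)\<^sup>2) + 2 * (B / ln 4) * higher_mass p"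
    if p: "p \<in> primes_x" for p
  proof -
    have "(euler_factor p - 1)\<^sup>2 \<le> 2 * (w p)\<^sup>2 + 2 * (higher_mass p)\<^sup>2"
      unfolding euler_factor_minus_1_eq[OF p] using zero_le_power2[of "w p - higher_mass p"]
      by (simp add: power2_eq_square algebra_simps)
    also have "(w p)\<^sup>2 \<le> A\<^sup>2 * (1 / (real p)\<^sup>2)"
      using w_prime_le[OF p] w_nonneg power_mono by (fastforce simp: power_divide)
    also have "(higher_mass p)\<^sup>2 \<le> (B / ln 4) * higher_mass p"
      using mult_right_mono[OF higher_mass_le[OF p] higher_mass_nonneg] by (simp add: power2_eq_square)
    finally show ?thesis by simp
  qed
  hence "euler_defect \<le> 2 * A\<^sup>2 * (\<Sum>p\<in>primes_x. 1 / (real p)\<^sup>2) + 2 * (B / ln 4) * (\<Sum>p\<in>primes_x. higher_mass p)"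
    unfolding euler_defect_def sum_distrib_left sum.distrib[symmetric] by (rule sum_mono)
  also have "\<dots> \<le> 2 * A\<^sup>2 * 1 + 2 * (B / ln 4) * (B / ln 4)"
    using sum_inverse_squares_primes_le[of x] sum_higher_mass_le B_pos
    unfolding primes_x_def by (intro add_mono mult_left_mono) auto
  finally show ?thesis by (simp add: power2_eq_square)
qed

lemma sum_prime_log_mass_le:
  assumes "y \<ge> 1"
  shows "(\<Sum>p\<in>primes_x. if real p \<le> y then w p * ln (real p) else 0) \<le> 2 * A * ln y"
proof -
  have "(\<Sum>p\<in>primes_x. if real p \<le> y then w p * ln (real p) else 0)
      = (\<Sum>p\<in>{p\<in>primes_x. real p \<le> y}. w p * ln (real p))"
    by (rule sum.inter_filter[OF finite_primes_x, symmetric])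
  also have "\<dots> \<le> (\<Sum>p\<in>{p\<in>primes_x. real p \<le> y}. A * (ln (real p) / real p))"
  proof (intro sum_mono)
    fix p assume "p \<in> {p\<in>primes_x. real p \<le> y}"
    hence "w p \<le> A / real p" "ln (real p) \<ge> 0"
      using w_prime_le prime_ge_1_nat[OF prime_of_primes_x] by auto
    thus "w p * ln (real p) \<le> A * (ln (real p) / real p)"
      using mult_right_mono[of "w p" "A / real p" "ln (real p)"] by simp
  qed
  also have "\<dots> \<le> (\<Sum>p\<in>{p. prime p \<and> real p \<le> y}. A * (ln (real p) / real p))"
    using A_pos prime_ge_1_nat
    by (intro sum_mono2 finite_primes_le) (auto simp: primes_x_def)
  also have "\<dots> = A * (\<Sum>p\<in>{p. prime p \<and> real p \<le> y}. ln (real p) / real p)"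
    by (simp add: sum_distrib_left)
  also have "\<dots> \<le> A * (2 * ln y)"
    using sum_ln_prime_over_prime_le[OF assms] A_pos by (intro mult_left_mono) auto
  finally show ?thesis by simp
qed

lemma log_mass_le:
  assumes y: "y \<ge> 1"
  shows "log_mass y \<le> 2 * A * ln y + B"
proof -
  have "log_mass y \<le> (\<Sum>p\<in>primes_x. (if real p \<le> y then w p * ln (real p) else 0)
      + (\<Sum>\<nu>\<in>{\<nu>\<in>exps_le x p. 2 \<le> \<nu>}. w (p ^ \<nu>) * ln (real (p ^ \<nu>))))"
    unfolding log_mass_def by (intro sum_mono log_mass_prime_summand_le)
  also have "\<dots> = (\<Sum>p\<in>primes_x. if real p \<le> y then w p * ln (real p) else 0)
      + (\<Sum>p\<in>primes_x. \<Sum>\<nu>\<in>{\<nu>\<in>exps_le x p. 2 \<le> \<nu>}. w (p ^ \<nu>) * ln (real (p ^ \<nu>)))"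
    by (rule sum.distrib)
  finally show ?thesis using sum_prime_log_mass_le[OF y] sum_higher_log_mass_le by linarith
qed

definition log_mass_bound :: real where "log_mass_bound = 2 * A * ln x + B"

lemma log_mass_bound_pos: "log_mass_bound > 0"
  unfolding log_mass_bound_def using A_pos B_pos x_ge_1 by (simp add: add_nonneg_pos)

lemma log_mass_le_bound: "log_mass y \<le> log_mass_bound"
  using log_mass_le_log_mass_x log_mass_le[OF x_ge_1] unfolding log_mass_bound_def by (rule order_trans)

lemma sum_w_ln_smooth_le: "(\<Sum>n\<in>smooth. w n * ln (real n)) \<le> log_mass_bound * mass"
proof -
  define z where "z = real (\<Sum>n\<in>smooth. n)"
  have "real n \<le> z" if "n \<in> smooth" for n
    using member_le_sum[OF that _ finite_smooth, of id] unfolding z_def by (simp only: of_nat_le_iff) simp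
  hence "(\<Sum>n\<in>smooth. w n * ln (real n)) = (\<Sum>n\<in>smooth. if real n \<le> z then w n * ln (real n) else 0)"
    by (intro sum.cong refl) auto
  also have "\<dots> \<le> (\<Sum>m\<in>smooth. w m * log_mass (z / real m))"
    by (rule sum_w_ln_le_log_mass)
  also have "\<dots> \<le> (\<Sum>m\<in>smooth. w m * log_mass_bound)"
    by (intro sum_mono mult_left_mono w_nonneg log_mass_le_bound)
  finally show ?thesis unfolding mass_def by (simp add: sum_distrib_left mult.commute)
qed

lemma mass_le_twice_partial_mass: "mass \<le> 2 * partial_mass (exp (2 * log_mass_bound))"
proof -
  define K where "K = log_mass_bound"
  have K: "K > 0" unfolding K_def by (rule log_mass_bound_pos)
  \<comment> \<open>Markov's inequality for \<open>ln n\<close>, combined with \<open>\<Sum> w n ln n \<le> K mass\<close>\<close>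
  have tail: "(if real n \<le> exp (2 * K) then 0 else w n) \<le> w n * ln (real n) / (2 * K)"
    if "n \<in> smooth" for n
  proof (cases "real n \<le> exp (2 * K)")
    case False
    hence "2 * K \<le> ln (real n)" using smooth_ge_1[OF that] by (simp add: ln_ge_iff)
    hence "w n * (2 * K) \<le> w n * ln (real n)" using w_nonneg by (intro mult_left_mono) auto
    thus ?thesis using False K by (simp add: field_simps)
  qed (use smooth_ge_1[OF that] w_nonneg[of n] K in simp)
  have "mass - partial_mass (exp (2 * K)) = (\<Sum>n\<in>smooth. if real n \<le> exp (2 * K) then 0 else w n)"
    unfolding mass_def partial_mass_def sum_subtractf[symmetric] by (intro sum.cong) auto
  also have "\<dots> \<le> (\<Sum>n\<in>smooth. w n * ln (real n)) / (2 * K)"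
    unfolding sum_divide_distrib by (intro sum_mono tail)
  also have "\<dots> \<le> K * mass / (2 * K)"
    using sum_w_ln_smooth_le K unfolding K_def by (intro divide_right_mono) auto
  also have "\<dots> = mass / 2" using K by simp
  finally show ?thesis unfolding K_def by simp
qed

lemma sum_partial_w_ln_le:
  "(\<Sum>n\<in>smooth. if real n \<le> z then w n * ln (real n) else 0)
   \<le> (\<Sum>n\<in>smooth. if real n \<le> z then w n * (2 * A * ln (z / real n) + B) else 0)"
proof -
  have "w m * log_mass (z / real m) \<le> (if real m \<le> z then w m * (2 * A * ln (z / real m) + B) else 0)"
    if "m \<in> smooth" for m
  proof (cases "real m \<le> z")
    case True
    hence "log_mass (z / real m) \<le> 2 * A * ln (z / real m) + B"
      using smooth_ge_1[OF that] by (intro log_mass_le) simp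
    thus ?thesis using True w_nonneg by (simp add: mult_left_mono)
  next
    case False
    thus ?thesis using smooth_ge_1[OF that] log_mass_eq_0 by simp
  qed
  thus ?thesis by (rule order_trans[OF sum_w_ln_le_log_mass sum_mono])
qed

lemma ln_times_partial_mass_le:
  assumes z: "1 \<le> z" "z \<le> z'"
  shows "ln z' * partial_mass z'
     \<le> (2 * A + 1) * (partial_mass z * ln z' + (partial_mass z' - partial_mass z) * ln (z' / z))
        + B * partial_mass z'"
proof -
  let ?L = "\<lambda>n. if real n \<le> z' then w n * ln (z' / real n) else 0"
  have "ln z' * partial_mass z'
      = (\<Sum>n\<in>smooth. if real n \<le> z' then w n * ln (real n) else 0) + (\<Sum>n\<in>smooth. ?L n)"
    unfolding partial_mass_def sum_distrib_left sum.distrib[symmetric]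
  proof (intro sum.cong refl)
    fix n assume "n \<in> smooth"
    hence "real n > 0" using smooth_ge_1 by fastforce
    hence "ln z' = ln (real n) + ln (z' / real n)" using z by (simp add: ln_div)
    thus "ln z' * (if real n \<le> z' then w n else 0)
        = (if real n \<le> z' then w n * ln (real n) else 0) + ?L n"
      by (simp add: algebra_simps)
  qed
  also have "\<dots> \<le> (\<Sum>n\<in>smooth. if real n \<le> z' then w n * (2 * A * ln (z' / real n) + B) else 0)
      + (\<Sum>n\<in>smooth. ?L n)"
    using sum_partial_w_ln_le by simp
  also have "\<dots> = (2 * A + 1) * (\<Sum>n\<in>smooth. ?L n) + B * partial_mass z'"
    unfolding partial_mass_def sum_distrib_left sum.distrib[symmetric]
    by (intro sum.cong refl) (simp add: algebra_simps)
  also have "\<dots> \<le> (2 * A + 1) * (partial_mass z * ln z' + (partial_mass z' - partial_mass z) * ln (z' / z))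
      + B * partial_mass z'"
    using sum_w_ln_ratio_le[OF z] A_pos by simp
  finally show ?thesis .
qed

lemma partial_mass_growth_step:
  assumes z: "1 \<le> z" "4 * B \<le> ln z"
  shows "partial_mass (exp ((1 + 1 / (4 * A + 2)) * ln z)) \<le> (12 * A + 6) * partial_mass z"
proof -
  define a e L where "a = 2 * A + 1" and "e = 1 / (4 * A + 2)" and "L = ln z"
  define z' where "z' = exp ((1 + e) * L)"
  define X Y where "X = partial_mass z'" and "Y = partial_mass z"
  have e: "e > 0" "e \<le> 1 / 2" unfolding e_def using A_pos by (auto simp: field_simps)
  have L: "L > 0" "z = exp L" unfolding L_def using z B_pos by (linarith, simp)
  have XY: "X \<ge> 0" "Y \<ge> 0" unfolding X_def Y_def by (simp_all add: partial_mass_nonneg)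
  have "z \<le> z'" unfolding z'_def L(2) using e L by simp
  \<comment> \<open>the exponent \<open>e\<close> is chosen so that \<open>a e L = L / 2\<close>\<close>
  have ln_z': "ln z' = (1 + e) * L" and ln_ratio: "ln (z' / z) = e * L" and aeL: "a * (e * L) = L / 2"
    unfolding z'_def L(2) a_def e_def using A_pos by (simp_all add: ln_div field_simps)
  have expand: "a * (Y * ((1 + e) * L) + (X - Y) * (e * L))
      = a * Y * ((1 + e) * L) + (a * (e * L)) * X - (a * (e * L)) * Y"
    by (simp add: algebra_simps)
  have "(1 + e) * L * X \<le> a * (Y * ((1 + e) * L) + (X - Y) * (e * L)) + B * X"
    using ln_times_partial_mass_le[OF z(1) \<open>z \<le> z'\<close>] unfolding X_def Y_def a_def ln_z' ln_ratio .
  hence "(1 + e) * L * X \<le> a * Y * ((1 + e) * L) + (L / 2) * X - (L / 2) * Y + B * X"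
    by (simp only: expand aeL)
  moreover have "L * X \<le> (1 + e) * L * X" using e L XY by (simp add: mult_right_mono)
  moreover have "a * Y * ((1 + e) * L) \<le> a * Y * ((3 / 2) * L)"
    using e L XY A_pos unfolding a_def by (intro mult_left_mono) auto
  moreover have "B * X \<le> (L / 4) * X" using z(2) XY unfolding L_def by (intro mult_right_mono) auto
  moreover have "(L / 2) * Y \<ge> 0" using L XY by simp
  ultimately have "(L / 4) * X \<le> a * Y * ((3 / 2) * L)" by linarith
  hence "(L / 4) * X \<le> (L / 4) * (6 * a * Y)" by (simp add: algebra_simps)
  hence "X \<le> 6 * a * Y" using L by (simp add: mult_ac)
  thus ?thesis unfolding X_def Y_def z'_def e_def L_def a_def by (simp add: algebra_simps)
qed

lemma partial_mass_iterate:
  assumes "4 * B \<le> ln x"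
  shows "partial_mass (exp ((1 + 1 / (4 * A + 2)) ^ j * ln x)) \<le> (12 * A + 6) ^ j * partial_mass x"
proof (induction j)
  case 0 thus ?case using x_ge_1 by simp
next
  case (Suc j)
  define e where "e = 1 / (4 * A + 2)"
  define z where "z = exp ((1 + e) ^ j * ln x)"
  have "(1 + e) ^ j \<ge> 1" unfolding e_def using A_pos by (simp add: one_le_power)
  hence "ln z \<ge> ln x" using x_ge_1 unfolding z_def by (simp add: mult_le_cancel_right1)
  moreover have "ln x \<ge> 0" using x_ge_1 by simp
  ultimately have z: "z \<ge> 1" "4 * B \<le> ln z" using assms unfolding z_def by auto
  have "exp ((1 + e) ^ Suc j * ln x) = exp ((1 + e) * ln z)" unfolding z_def by (simp add: mult.assoc)
  moreover have "partial_mass (exp ((1 + e) * ln z)) \<le> (12 * A + 6) * partial_mass z"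
    unfolding e_def by (rule partial_mass_growth_step[OF z])
  ultimately have "partial_mass (exp ((1 + e) ^ Suc j * ln x)) \<le> (12 * A + 6) * partial_mass z"
    by (simp only:)
  also have "\<dots> \<le> (12 * A + 6) * ((12 * A + 6) ^ j * partial_mass x)"
    using Suc A_pos unfolding z_def e_def by (intro mult_left_mono) auto
  finally show ?case unfolding e_def by simp
qed

lemma mass_le_of_ln_x_large:
  assumes "4 * B \<le> ln x"
  shows "mass \<le> 2 * (12 * A + 6) ^ nat \<lceil>4 * A * (4 * A + 2)\<rceil> * partial_mass x"
proof -
  define e k where "e = 1 / (4 * A + 2)" and "k = nat \<lceil>4 * A * (4 * A + 2)\<rceil>"
  have "real k * e \<ge> 4 * A" unfolding k_def e_def using A_pos by (simp add: field_simps)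
  moreover have "1 + real k * e \<le> (1 + e) ^ k"
    using A_pos unfolding e_def by (intro Bernoulli_inequality) (simp add: add_pos_pos less_imp_le
      order_trans[of "-1" 0])
  ultimately have "1 + 4 * A \<le> (1 + e) ^ k" by simp
  hence "2 * log_mass_bound \<le> (1 + e) ^ k * ln x"
    unfolding log_mass_bound_def using assms x_ge_1 B_pos mult_right_mono[of "1 + 4 * A" "(1 + e) ^ k" "ln x"]
    by (simp add: algebra_simps)
  hence "partial_mass (exp (2 * log_mass_bound)) \<le> partial_mass (exp ((1 + e) ^ k * ln x))"
    by (intro partial_mass_mono) simp
  also have "\<dots> \<le> (12 * A + 6) ^ k * partial_mass x" unfolding e_def using partial_mass_iterate[OF assms] .
  finally show ?thesis using mass_le_twice_partial_mass unfolding k_def by simp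
qed

lemma mass_le_of_ln_x_small:
  assumes "ln x < 4 * B"
  shows "mass \<le> (1 + A + B / ln 4) ^ nat \<lceil>exp (4 * B)\<rceil> * partial_mass x"
proof -
  define c where "c = 1 + A + B / ln 4"
  have c: "c \<ge> 1" unfolding c_def using A_pos B_pos by simp
  have "euler_factor p \<le> c" if p: "p \<in> primes_x" for p
  proof -
    have "w p \<le> A / real p" by (rule w_prime_le[OF p])
    also have "\<dots> \<le> A" using A_pos prime_ge_1_nat[OF prime_of_primes_x[OF p]] by (simp add: divide_le_eq)
    finally show ?thesis
      using euler_factor_minus_1_eq[OF p] higher_mass_le[OF p] unfolding c_def by simp
  qed
  hence "mass \<le> (\<Prod>p\<in>primes_x. c)"
    unfolding mass_eq_prod using euler_factor_ge_1 prime_of_primes_x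
    by (intro prod_mono) (auto intro: order_trans[OF zero_le_one])
  also have "\<dots> = c ^ card primes_x" by simp
  also have "\<dots> \<le> c ^ nat \<lceil>exp (4 * B)\<rceil>"
  proof (intro power_increasing c)
    have "primes_x \<subseteq> {1..nat \<lfloor>x\<rfloor>}"
      unfolding primes_x_def using prime_ge_1_nat by (auto simp: le_nat_floor)
    hence "card primes_x \<le> nat \<lfloor>x\<rfloor>" using card_mono[of "{1..nat \<lfloor>x\<rfloor>}"] by simp
    moreover have "x < exp (4 * B)" using assms x_ge_1 by (metis exp_less_cancel_iff exp_ln less_le_trans zero_less_one)
    hence "nat \<lfloor>x\<rfloor> \<le> nat \<lceil>exp (4 * B)\<rceil>" by (intro nat_mono) linarith
    ultimately show "card primes_x \<le> nat \<lceil>exp (4 * B)\<rceil>" by linarith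
  qed
  also have "\<dots> \<le> c ^ nat \<lceil>exp (4 * B)\<rceil> * partial_mass x"
    using partial_mass_x_ge_1 c by (simp add: mult_le_cancel_left1)
  finally show ?thesis unfolding c_def .
qed

lemma mass_le_partial_mass_x: "mass \<le> mass_constant A B * partial_mass x"
proof (cases "4 * B \<le> ln x")
  case True
  thus ?thesis using mass_le_of_ln_x_large partial_mass_nonneg
    unfolding mass_constant_def by (meson max.cobounded1 mult_right_mono order_trans)
next
  case False
  thus ?thesis using mass_le_of_ln_x_small partial_mass_nonneg
    unfolding mass_constant_def by (meson max.cobounded2 mult_right_mono order_trans not_le)
qed

lemma variance_le:
  assumes "additive t"
  shows "(\<Sum>n\<in>{n. 1 \<le> n \<and> real n \<le> x}. w n * (t n - pp_mean t)\<^sup>2)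
           \<le> variance_constant A B * pp_second_moment t * partial_mass x"
proof -
  interpret mult_weight_additive x lam t by unfold_locales (rule assms)
  have "(\<Sum>n\<in>{n. 1 \<le> n \<and> real n \<le> x}. w n * (t n - pp_mean t)\<^sup>2) \<le> (\<Sum>n\<in>smooth. w n * (t n - pp_mean t)\<^sup>2)"
    using upto_subset_pp_smooth[of x] finite_smooth w_nonneg unfolding primes_x_def
    by (intro sum_mono2) auto
  also have "\<dots> \<le> mass * (1 + euler_defect) * pp_second_moment t"
    by (rule variance_pp_smooth_le)
  also have "\<dots> \<le> (mass_constant A B * partial_mass x) * (1 + 2 * A\<^sup>2 + 2 * (B / ln 4)\<^sup>2) * pp_second_moment t"
    using mass_le_partial_mass_x euler_defect_le mass_nonneg euler_defect_nonneg pp_second_moment_nonneg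
    by (intro mult_right_mono mult_mono) auto
  finally show ?thesis unfolding variance_constant_def by (simp add: algebra_simps)
qed

lemma complex_variance_le:
  fixes th :: "nat \<Rightarrow> complex"
  assumes "additive th"
  shows "(\<Sum>n\<in>{n. 1 \<le> n \<and> real n \<le> x}. lam n / real n *
            (cmod (th n - (\<Sum>q\<in>{q. primepow q \<and> real q \<le> x}. of_real (lam q) * th q / of_nat q)))\<^sup>2)
     \<le> variance_constant A B * (\<Sum>q\<in>{q. primepow q \<and> real q \<le> x}. lam q * (cmod (th q))\<^sup>2 / real q)
         * (\<Sum>n\<in>{n. 1 \<le> n \<and> real n \<le> x}. lam n / real n)"
proof -
  define Theta where "Theta = (\<Sum>q\<in>{q. primepow q \<and> real q \<le> x}. of_real (lam q) * th q / of_nat q)"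
  have add: "additive (\<lambda>n. Re (th n))" "additive (\<lambda>n. Im (th n))"
    using assms unfolding additive_def by auto
  have Theta: "Re Theta = pp_mean (\<lambda>n. Re (th n))" "Im Theta = pp_mean (\<lambda>n. Im (th n))"
    unfolding Theta_def pp_mean_def w_def by (simp_all add: Re_sum Im_sum)
  have "(\<Sum>q\<in>{q. primepow q \<and> real q \<le> x}. lam q * (cmod (th q))\<^sup>2 / real q)
      = pp_second_moment (\<lambda>n. Re (th n)) + pp_second_moment (\<lambda>n. Im (th n))"
    unfolding pp_second_moment_def w_def sum.distrib[symmetric]
    by (intro sum.cong refl) (simp add: cmod_power2 algebra_simps add_divide_distrib)
  moreover have "(\<Sum>n\<in>{n. 1 \<le> n \<and> real n \<le> x}. lam n / real n * (cmod (th n - Theta))\<^sup>2)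
      = (\<Sum>n\<in>{n. 1 \<le> n \<and> real n \<le> x}. w n * (Re (th n) - pp_mean (\<lambda>n. Re (th n)))\<^sup>2)
        + (\<Sum>n\<in>{n. 1 \<le> n \<and> real n \<le> x}. w n * (Im (th n) - pp_mean (\<lambda>n. Im (th n)))\<^sup>2)"
    unfolding sum.distrib[symmetric] w_def Theta[symmetric]
    by (intro sum.cong refl) (simp add: cmod_power2 algebra_simps)
  ultimately show ?thesis
    using variance_le[OF add(1)] variance_le[OF add(2)]
    unfolding Theta_def partial_mass_x w_def by (simp add: algebra_simps)
qed

end

lemma classM_weightI:
  assumes "x \<ge> 1" "A > 0" "B > 0" "\<forall>n. lam n \<ge> 0" "multiplicative lam"
    and "classM x A B (\<lambda>n. complex_of_real (lam n))"
  shows "classM_weight x lam A B"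
proof
  show "lam p \<le> A" if "prime p" "real p \<le> x" for p
    using assms that unfolding classM_def by (metis abs_of_nonneg norm_of_real)
  show "(\<Sum>(p, \<nu>)\<in>{(p, \<nu>). prime p \<and> 2 \<le> \<nu> \<and> real (p ^ \<nu>) \<le> x}.
          lam (p ^ \<nu>) * ln (real (p ^ \<nu>)) / real (p ^ \<nu>)) \<le> B"
    using assms unfolding classM_def by (simp add: case_prod_unfold)
qed (use assms in auto)

theorem lemma5p1:
  fixes A B :: real
  assumes "A > 0" and "B > 0"
  shows "\<exists>C>0. \<forall>(x::real) (lam::nat \<Rightarrow> real) (th::nat \<Rightarrow> complex).
     x \<ge> 1 \<longrightarrow> (\<forall>n. lam n \<ge> 0) \<longrightarrow> multiplicative lam
     \<longrightarrow> classM x A B (\<lambda>n. complex_of_real (lam n)) \<longrightarrow> additive th \<longrightarrow>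
     (let Theta = (\<Sum>q\<in>{q. primepow q \<and> real q \<le> x}. of_real (lam q) * th q / of_nat q);
          S = (\<Sum>q\<in>{q. primepow q \<and> real q \<le> x}. lam q * (cmod (th q))\<^sup>2 / real q)
      in (\<Sum>n\<in>{n. 1 \<le> n \<and> real n \<le> x}. lam n / real n * (cmod (th n - Theta))\<^sup>2)
         \<le> C * S * (\<Sum>n\<in>{n. 1 \<le> n \<and> real n \<le> x}. lam n / real n))"
  unfolding Let_def
proof (intro exI[of _ "variance_constant A B"] conjI allI impI, goal_cases)
  case 1
  show ?case using variance_constant_pos assms(1) .
next
  case (2 x lam th)
  then interpret classM_weight x lam A B using assms by (intro classM_weightI) auto
  show ?case using complex_variance_le[OF \<open>additive th\<close>] .
qed

end
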